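(* Let $k>1$ be a fixed integer. Suppose that a semigroup $S$ (i) satisfies the identities $x\,y_1^ky_2^k\cdots y_n^k\,x\approx x\,y_n^ky_{n-1}^k\cdots y_1^k\,x$ for all $n>1$; (ii) does not satisfy the identity $x^ky^kx^k\approx x^k(y^kx^k)^{k+1}$; (iii) satisfies the identities $x^{k+2}\approx x^2$, $x^{k+1}yx\approx xyx$ and $xyx^{k+1}\approx xyx$. Then $S$ is non-finitely based.
   Context: All letters denote distinct variables; words are elements of the free semigroup over a countably infinite alphabet. $S$ satisfies $\mathbf u\approx\mathbf v$ if $\varphi(\mathbf u)=\varphi(\mathbf v)$ for every homomorphism $\varphi$ from the free semigroup to $S$. $S$ is finitely based if all its identities are derivable from a finite subset of them; otherwise non-finitely based. *)

theory Defs
  imports Main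
begin

text \<open>Words over the countably infinite alphabet of variables (natural numbers):
  elements of the free semigroup = nonempty lists of letters.\<close>

definition is_word :: "nat list \<Rightarrow> bool" where
  "is_word w \<longleftrightarrow> w \<noteq> []"

fun eval_word :: "(nat \<Rightarrow> 'a::semigroup_mult) \<Rightarrow> nat list \<Rightarrow> 'a" where
  "eval_word \<phi> [] = undefined"
| "eval_word \<phi> [x] = \<phi> x"
| "eval_word \<phi> (x # y # w) = \<phi> x * eval_word \<phi> (y # w)"

definition satisfies :: "'a::semigroup_mult itself \<Rightarrow> nat list \<Rightarrow> nat list \<Rightarrow> bool" where
  "satisfies S u v \<longleftrightarrow> is_word u \<and> is_word v \<and>
     (\<forall>\<phi> :: nat \<Rightarrow> 'a. eval_word \<phi> u = eval_word \<phi> v)"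

definition subst_word :: "(nat \<Rightarrow> nat list) \<Rightarrow> nat list \<Rightarrow> nat list" where
  "subst_word \<sigma> w = concat (map \<sigma> w)"

text \<open>Derivability of identities from a set of identities (equational logic
  for semigroups: the fully invariant congruence generated by \<Sigma>).\<close>

inductive derivable :: "(nat list \<times> nat list) set \<Rightarrow> nat list \<Rightarrow> nat list \<Rightarrow> bool"
  for \<Sigma> where
  ax: "(u, v) \<in> \<Sigma> \<Longrightarrow> derivable \<Sigma> u v"
| refl: "is_word u \<Longrightarrow> derivable \<Sigma> u u"
| sym: "derivable \<Sigma> u v \<Longrightarrow> derivable \<Sigma> v u"
| trans: "derivable \<Sigma> u v \<Longrightarrow> derivable \<Sigma> v w \<Longrightarrow> derivable \<Sigma> u w"
| subst: "derivable \<Sigma> u v \<Longrightarrow> (\<forall>x. is_word (\<sigma> x)) \<Longrightarrow>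
           derivable \<Sigma> (subst_word \<sigma> u) (subst_word \<sigma> v)"
| mult_left: "derivable \<Sigma> u v \<Longrightarrow> is_word w \<Longrightarrow> derivable \<Sigma> (w @ u) (w @ v)"
| mult_right: "derivable \<Sigma> u v \<Longrightarrow> is_word w \<Longrightarrow> derivable \<Sigma> (u @ w) (v @ w)"

definition finitely_based :: "'a::semigroup_mult itself \<Rightarrow> bool" where
  "finitely_based S \<longleftrightarrow>
     (\<exists>\<Sigma>. finite \<Sigma> \<and> (\<forall>(u, v) \<in> \<Sigma>. satisfies S u v) \<and>
          (\<forall>u v. satisfies S u v \<longrightarrow> derivable \<Sigma> u v))"

definition wpow :: "nat list \<Rightarrow> nat \<Rightarrow> nat list" where
  "wpow w m = concat (replicate m w)"

end

theory Submission
  imports Defs "HOL-Library.Sublist"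
begin

text \<open>Substituting x^k for the letters outside a set B and y^k for those inside it, and
  multiplying by x^k on both sides, turns a word u into (x^k y^k)^c x^k, where c is the number
  of maximal B-blocks of u: x^k and y^k are idempotent because x^(k+2) = x^2.  Since
  x^k y^k x^k = x^k (y^k x^k)^(k+1) fails in S while exponents are periodic with period k,
  no identity of S can relate a word with at most one B-block to one with a different
  number of B-blocks.  In particular, in every word V with x y_1^k ... y_n^k x = V in S,
  each letter y_j and each pair {y_j, y_(j+1)} forms a single block, so one factor
  y_j y_(j+1) of V forces all of them.  An identity s = t of a finite basis, with n large
  compared to s, applied inside such a V leaves one such factor intact, hence all.  So the
  basis cannot derive the identity (i) for this n, since its right side lacks y_1 y_2.\<close>

lemma eval_word_Cons: "w \<noteq> [] \<Longrightarrow> eval_word \<phi> (x # w) = \<phi> x * eval_word \<phi> w"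
  by (cases w) auto

lemma eval_word_append:
  "u \<noteq> [] \<Longrightarrow> v \<noteq> [] \<Longrightarrow> eval_word \<phi> (u @ v) = eval_word \<phi> u * eval_word \<phi> v"
proof (induction u rule: induct_list012)
  case (3 x y u)
  then show ?case by (simp add: eval_word_Cons mult.assoc)
qed (auto simp: eval_word_Cons)

lemma subst_word_Nil [simp]: "subst_word \<sigma> [] = []"
  and subst_word_Cons [simp]: "subst_word \<sigma> (x # w) = \<sigma> x @ subst_word \<sigma> w"
  and subst_word_append [simp]: "subst_word \<sigma> (u @ w) = subst_word \<sigma> u @ subst_word \<sigma> w"
  by (simp_all add: subst_word_def)

lemma subst_word_singleton [simp]: "subst_word (\<lambda>x. [x]) w = w"
  by (induction w) auto

lemma subst_word_subst_word:
  "subst_word \<theta> (subst_word \<sigma> w) = subst_word (\<lambda>x. subst_word \<theta> (\<sigma> x)) w"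
  by (induction w) auto

lemma subst_word_eq_Nil_iff:
  "\<forall>x. \<sigma> x \<noteq> [] \<Longrightarrow> subst_word \<sigma> w = [] \<longleftrightarrow> w = []"
  by (cases w) auto

lemma eval_word_subst_word:
  assumes "\<forall>x. \<sigma> x \<noteq> []" and "w \<noteq> []"
  shows "eval_word \<phi> (subst_word \<sigma> w) = eval_word (\<lambda>x. eval_word \<phi> (\<sigma> x)) w"
  using assms(2)
proof (induction w)
  case (Cons x w)
  with assms(1) show ?case
    by (cases "w = []") (auto simp: eval_word_append eval_word_Cons subst_word_eq_Nil_iff)
qed simp

lemma satisfies_sym: "satisfies S u v \<Longrightarrow> satisfies S v u"
  unfolding satisfies_def by auto

lemma satisfies_trans: "satisfies S u v \<Longrightarrow> satisfies S v w \<Longrightarrow> satisfies S u w"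
  unfolding satisfies_def by auto

lemma satisfies_subst_word:
  "satisfies S u v \<Longrightarrow> \<forall>x. \<sigma> x \<noteq> [] \<Longrightarrow> satisfies S (subst_word \<sigma> u) (subst_word \<sigma> v)"
  unfolding satisfies_def is_word_def by (simp add: subst_word_eq_Nil_iff eval_word_subst_word)

lemma satisfies_in_context: "satisfies S u v \<Longrightarrow> satisfies S (a @ u @ b) (a @ v @ b)"
  unfolding satisfies_def is_word_def
  by (cases "a = []"; cases "b = []") (simp_all add: eval_word_append)

lemma wpow_Suc: "wpow w (Suc m) = w @ wpow w m"
  by (simp add: wpow_def)

lemma wpow_singleton: "wpow [i] m = replicate m i"
  by (induction m) (simp_all add: wpow_def)

lemma wpow_shift: "x @ wpow (y @ x) m = wpow (x @ y) m @ x"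
  by (induction m) (simp_all add: wpow_Suc wpow_def)

lemma eval_word_wpow_append:
  "w \<noteq> [] \<Longrightarrow> x \<noteq> [] \<Longrightarrow>
     eval_word \<phi> (wpow w m @ x) = ((*) (eval_word \<phi> w) ^^ m) (eval_word \<phi> x)"
  by (induction m) (simp_all add: wpow_Suc wpow_def eval_word_append)

section \<open>Periodic powers\<close>

text \<open>pow_suc z n is z^(n+1): a semigroup has no z^0.\<close>

fun pow_suc :: "'a::semigroup_mult \<Rightarrow> nat \<Rightarrow> 'a" where
  "pow_suc z 0 = z"
| "pow_suc z (Suc n) = z * pow_suc z n"

lemma eval_word_replicate: "eval_word \<phi> (replicate (Suc m) x) = pow_suc (\<phi> x) m"
  by (induction m) (auto simp: eval_word_Cons)

lemma eval_word_wpow_singleton: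
  "k \<ge> 1 \<Longrightarrow> eval_word \<phi> (wpow [i] k) = pow_suc (\<phi> i) (k - 1)"
  using eval_word_replicate[of \<phi> "k - 1" i] by (simp add: wpow_singleton)

lemma pow_suc_add: "pow_suc z m * pow_suc z n = pow_suc z (m + n + 1)"
  by (induction m) (auto simp: mult.assoc)

lemma funpow_mult_Suc: "((*) z ^^ Suc m) x = pow_suc z m * x"
  by (induction m) (auto simp: mult.assoc)

lemma satisfies_power_period:
  fixes S :: "'a::semigroup_mult itself" and z :: 'a
  assumes "satisfies S (wpow [0] (k + 2)) (wpow [0] 2)"
  shows "pow_suc z (k + 1) = pow_suc z 1"
proof -
  have "eval_word (\<lambda>_. z) (wpow [0] (Suc (k + 1))) = eval_word (\<lambda>_. z) (wpow [0] (Suc 1))"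
    using assms unfolding satisfies_def by (simp add: numeral_2_eq_2)
  then show ?thesis by (simp only: wpow_singleton eval_word_replicate)
qed

context
  fixes z :: "'a::semigroup_mult" and k :: nat
  assumes period: "pow_suc z (k + 1) = pow_suc z 1"
begin

lemma pow_suc_period:
  assumes "m \<ge> 1" shows "pow_suc z (m + k) = pow_suc z m"
proof (cases "m = 1")
  case False
  define j where "j = m - 2"
  have m: "m = j + 2" using assms False by (simp add: j_def)
  have "j + (k + 1) + 1 = m + k" by (simp add: m)
  then have "pow_suc z (m + k) = pow_suc z j * pow_suc z (k + 1)"
    by (metis pow_suc_add)
  also have "\<dots> = pow_suc z (j + 1 + 1)"
    by (simp only: period pow_suc_add)
  finally show ?thesis by (simp add: m)
qed (use period in simp)

lemma pow_suc_idem: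
  assumes "k \<ge> 2" shows "pow_suc z (k - 1) * pow_suc z (k - 1) = pow_suc z (k - 1)"
proof -
  have "(k - 1) + (k - 1) + 1 = (k - 1) + k" using assms by simp
  then show ?thesis using pow_suc_period[of "k - 1"] pow_suc_add[of z "k - 1" "k - 1"] assms by simp
qed

lemma funpow_mult_period:
  assumes "m \<ge> 2" shows "((*) z ^^ (m + i * k)) x = ((*) z ^^ m) x"
proof (induction i)
  case (Suc i)
  obtain j where m: "m = Suc j" and "j \<ge> 1" using assms by (cases m) auto
  have "((*) z ^^ (m + Suc i * k)) x = ((*) z ^^ Suc (j + k)) (((*) z ^^ (i * k)) x)"
    by (simp add: m funpow_add algebra_simps)
  also have "\<dots> = ((*) z ^^ m) (((*) z ^^ (i * k)) x)"
    unfolding funpow_mult_Suc m using pow_suc_period[OF \<open>j \<ge> 1\<close>] by simp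
  also have "\<dots> = ((*) z ^^ (m + i * k)) x"
    by (simp add: funpow_add)
  finally show ?case using Suc.IH by simp
qed simp

text \<open>A relation z x = z^c x with c \<ge> 2 lets z x climb through all exponents
  1 + j (c - 1); the exponent 1 + k (c - 1) is congruent to k + 1 modulo the period k.\<close>

lemma mult_eq_funpow_period:
  assumes eq: "z * x = ((*) z ^^ c) x" and "c \<ge> 2" and "k \<ge> 1"
  shows "z * x = ((*) z ^^ (k + 1)) x"
proof -
  have climb: "z * x = ((*) z ^^ (1 + j * (c - 1))) x" for j
  proof (induction j)
    case (Suc j)
    have "1 + Suc j * (c - 1) = j * (c - 1) + c" using \<open>c \<ge> 2\<close> by simp
    then have "((*) z ^^ (1 + Suc j * (c - 1))) x = ((*) z ^^ (j * (c - 1))) (((*) z ^^ c) x)"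
      by (simp only: funpow_add comp_apply)
    also have "\<dots> = ((*) z ^^ (j * (c - 1))) (z * x)"
      by (simp only: eq)
    also have "\<dots> = ((*) z ^^ Suc (j * (c - 1))) x"
      by (simp only: funpow_Suc_right comp_apply)
    finally show ?case using Suc.IH by simp
  qed simp
  have "1 + k * (c - 1) = (k + 1) + (c - 2) * k" using \<open>c \<ge> 2\<close>
    by (simp add: algebra_simps)
  then show ?thesis
    using climb[of k] funpow_mult_period[of "k + 1" "c - 2" x] \<open>k \<ge> 1\<close> by simp
qed

end

section \<open>Blocks\<close>

text \<open>The number of maximal factors of w all of whose letters lie in B.\<close>

fun block_count :: "nat set \<Rightarrow> nat list \<Rightarrow> nat" where
  "block_count B [] = 0"
| "block_count B (x # w) = (if x \<in> B \<and> (w = [] \<or> hd w \<notin> B) then 1 else 0) + block_count B w"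

lemma block_count_eq_0_iff: "block_count B w = 0 \<longleftrightarrow> set w \<inter> B = {}"
proof (induction w)
  case (Cons x w)
  then show ?case by (cases w) auto
qed simp

lemma block_count_neq_0: "x \<in> set w \<Longrightarrow> x \<in> B \<Longrightarrow> block_count B w \<noteq> 0"
  using block_count_eq_0_iff by blast

lemma block_count_append:
  "xs = [] \<or> last xs \<notin> B \<Longrightarrow> block_count B (xs @ ys) = block_count B xs + block_count B ys"
proof (induction xs)
  case (Cons x xs)
  then show ?case by (cases xs) auto
qed simp

lemma block_count_single_block:
  assumes "set p \<inter> B = {}" and "q \<noteq> []" and "set q \<subseteq> B" and "set r \<inter> B = {}"
  shows "block_count B (p @ q @ r) = 1"
proof -
  have "block_count B (q @ r) = 1"
    using assms(2,3)
  proof (induction q)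
    case (Cons x q)
    with assms(4) show ?case
      by (cases q) (auto simp: block_count_eq_0_iff dest: hd_in_set)
  qed simp
  moreover have "block_count B p = 0" using assms(1) by (simp add: block_count_eq_0_iff)
  ultimately show ?thesis
    using assms(1) block_count_append[of p B "q @ r"] by (cases "p = []") (auto dest: last_in_set)
qed

lemma block_count_eq_1_iff:
  "block_count B w = 1 \<longleftrightarrow>
     (\<exists>p q r. w = p @ q @ r \<and> q \<noteq> [] \<and> set q \<subseteq> B \<and> set p \<inter> B = {} \<and> set r \<inter> B = {})"
  (is "_ \<longleftrightarrow> (\<exists>p q r. ?block w p q r)")
proof
  show "\<exists>p q r. ?block w p q r" if "block_count B w = 1"
    using that
  proof (induction w)
    case (Cons x w)
    show ?case
    proof (cases "x \<in> B")
      case False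
      with Cons obtain p q r where "?block w p q r" by auto
      with False show ?thesis by (intro exI[of _ "x # p"] exI[of _ q] exI[of _ r]) auto
    next
      case True
      show ?thesis
      proof (cases "w = [] \<or> hd w \<notin> B")
        case True
        with Cons.prems \<open>x \<in> B\<close> have "set w \<inter> B = {}" by (simp add: block_count_eq_0_iff)
        with \<open>x \<in> B\<close> show ?thesis by (intro exI[of _ "[]"] exI[of _ "[x]"] exI[of _ w]) auto
      next
        case False
        with Cons obtain p q r where block: "?block w p q r" by auto
        with False have "p = []" by (cases p) auto
        with block \<open>x \<in> B\<close> show ?thesis by (intro exI[of _ "[]"] exI[of _ "x # q"] exI[of _ r]) auto
      qed
    qed
  qed simp
qed (use block_count_single_block in blast)

lemma block_entry_unique:
  assumes "block_count B w = 1" and "w = u @ a # b # v" and "a \<notin> B" and "b \<in> B"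
  shows "a = last (takeWhile (\<lambda>x. x \<notin> B) w)"
proof -
  have "block_count B (b # v) \<noteq> 0" using \<open>b \<in> B\<close> by (intro block_count_neq_0) auto
  moreover have "block_count B w = block_count B (u @ [a]) + block_count B (b # v)"
    using assms(2,3) block_count_append[of "u @ [a]" B "b # v"] by simp
  ultimately have "block_count B (u @ [a]) = 0" using assms(1) by linarith
  then have "set u \<inter> B = {}" by (simp add: block_count_eq_0_iff)
  then have "takeWhile (\<lambda>x. x \<notin> B) (u @ a # b # v) = u @ [a]"
    using assms(3,4) by (subst takeWhile_append2) auto
  then show ?thesis using assms(2) by simp
qed

lemma block_exit_unique:
  assumes "block_count B w = 1" and "w = u @ a # b # v" and "a \<in> B" and "b \<notin> B"
  shows "b = last (takeWhile (\<lambda>x. x \<notin> B) (rev w))"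
proof -
  have "block_count B (u @ [a, b]) \<noteq> 0" using \<open>a \<in> B\<close> by (intro block_count_neq_0) auto
  moreover have "block_count B w = block_count B (u @ [a, b]) + block_count B v"
    using assms(2,4) block_count_append[of "u @ [a, b]" B v] by simp
  ultimately have "block_count B v = 0" using assms(1) by linarith
  then have "set v \<inter> B = {}" by (simp add: block_count_eq_0_iff)
  then have "takeWhile (\<lambda>x. x \<notin> B) (rev v @ b # a # rev u) = rev v @ [b]"
    using assms(3,4) by (subst takeWhile_append2) auto
  then show ?thesis using assms(2) by simp
qed

lemma sublist_pair_iff: "sublist [a, b] w \<longleftrightarrow> (\<exists>u v. w = u @ a # b # v)"
  by (simp add: sublist_def)

lemma sublist_adjacent_distinct:
  "x \<in> set w \<Longrightarrow> y \<in> set w \<Longrightarrow> x \<noteq> y \<Longrightarrow> \<exists>c d. c \<noteq> d \<and> sublist [c, d] w"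
proof (induction w)
  case (Cons c w)
  show ?case
  proof (cases w)
    case (Cons d w')
    show ?thesis
    proof (cases "c = d")
      case True
      with Cons.prems \<open>w = d # w'\<close> have "x \<in> set w" "y \<in> set w" by auto
      then obtain c' d' where "c' \<noteq> d'" "sublist [c', d'] w" using Cons.IH Cons.prems(3) by blast
      then show ?thesis by (auto simp: sublist_Cons_right)
    next
      case False
      have "sublist [c, d] (c # w)" using \<open>w = d # w'\<close> by (metis append_Cons append_Nil sublist_append_rightI)
      with False show ?thesis by blast
    qed
  qed (use Cons.prems in simp)
qed simp

lemma block_of_two_letters_adjacent:
  assumes "block_count {a, b} w = 1" and "a \<in> set w" and "b \<in> set w" and "a \<noteq> b"
  shows "sublist [a, b] w \<or> sublist [b, a] w"
proof -
  obtain p q r where w: "w = p @ q @ r" and q: "set q \<subseteq> {a, b}"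
    and "set p \<inter> {a, b} = {}" "set r \<inter> {a, b} = {}"
    using assms(1) unfolding block_count_eq_1_iff by blast
  with assms(2,3) have "a \<in> set q" "b \<in> set q" by auto
  then obtain c d where "c \<noteq> d" and cd: "sublist [c, d] q"
    using sublist_adjacent_distinct[OF _ _ assms(4)] by blast
  have "sublist [c, d] w"
    using cd by (rule sublist_order.order.trans) (simp add: w)
  moreover have "(c = a \<and> d = b) \<or> (c = b \<and> d = a)"
    using q set_mono_sublist[OF cd] \<open>c \<noteq> d\<close> by auto
  ultimately show ?thesis by blast
qed

lemma block_count_singleton_eq_1_imp_mem: "block_count {j} w = 1 \<Longrightarrow> j \<in> set w"
  using block_count_eq_0_iff[of "{j}" w] by auto

lemma sublist_pair_step_up:
  assumes "block_count {Suc m} w = 1" and "block_count {Suc (Suc m)} w = 1"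
    and "block_count {Suc m, Suc (Suc m)} w = 1" and "sublist [m, Suc m] w"
  shows "sublist [Suc m, Suc (Suc m)] w"
proof (rule ccontr)
  assume "\<not> ?thesis"
  with block_of_two_letters_adjacent[OF assms(3) block_count_singleton_eq_1_imp_mem[OF assms(1)]
      block_count_singleton_eq_1_imp_mem[OF assms(2)]]
  have "sublist [Suc (Suc m), Suc m] w" by simp
  then obtain u v where "w = u @ Suc (Suc m) # Suc m # v" by (auto simp: sublist_pair_iff)
  then have "Suc (Suc m) = last (takeWhile (\<lambda>x. x \<notin> {Suc m}) w)"
    by (rule block_entry_unique[OF assms(1)]) simp_all
  moreover obtain u' v' where "w = u' @ m # Suc m # v'" using assms(4) by (auto simp: sublist_pair_iff)
  then have "m = last (takeWhile (\<lambda>x. x \<notin> {Suc m}) w)"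
    by (rule block_entry_unique[OF assms(1)]) simp_all
  ultimately show False by simp
qed

lemma sublist_pair_step_down:
  assumes "block_count {m} w = 1" and "block_count {Suc m} w = 1"
    and "block_count {m, Suc m} w = 1" and "sublist [Suc m, Suc (Suc m)] w"
  shows "sublist [m, Suc m] w"
proof (rule ccontr)
  assume "\<not> ?thesis"
  with block_of_two_letters_adjacent[OF assms(3) block_count_singleton_eq_1_imp_mem[OF assms(1)]
      block_count_singleton_eq_1_imp_mem[OF assms(2)]]
  have "sublist [Suc m, m] w" by simp
  then obtain u v where "w = u @ Suc m # m # v" by (auto simp: sublist_pair_iff)
  then have "m = last (takeWhile (\<lambda>x. x \<notin> {Suc m}) (rev w))"
    by (rule block_exit_unique[OF assms(2)]) simp_all
  moreover obtain u' v' where "w = u' @ Suc m # Suc (Suc m) # v'" using assms(4) by (auto simp: sublist_pair_iff)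
  then have "Suc (Suc m) = last (takeWhile (\<lambda>x. x \<notin> {Suc m}) (rev w))"
    by (rule block_exit_unique[OF assms(2)]) simp_all
  ultimately show False by simp
qed

lemma sublist_pair_chain:
  assumes single: "\<And>j. 1 \<le> j \<Longrightarrow> j \<le> n \<Longrightarrow> block_count {j} w = 1"
    and pair: "\<And>j. 1 \<le> j \<Longrightarrow> j < n \<Longrightarrow> block_count {j, Suc j} w = 1"
    and "1 \<le> i" "i < n" "sublist [i, Suc i] w"
    and "1 \<le> m" "m < n"
  shows "sublist [m, Suc m] w"
proof (cases "i \<le> m")
  case True
  then show ?thesis using \<open>m < n\<close>
  proof (induction m rule: dec_induct)
    case (step j)
    show ?case
      by (rule sublist_pair_step_up[OF single single pair]) (use step \<open>1 \<le> i\<close> in auto)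
  qed (use assms in simp)
next
  case False
  then have "m \<le> i" by simp
  then show ?thesis using \<open>1 \<le> m\<close>
  proof (induction m rule: inc_induct)
    case (step j)
    show ?case
      by (rule sublist_pair_step_down[OF single single pair]) (use step \<open>i < n\<close> in auto)
  qed (use assms in simp)
qed

lemma sublist_pair_concat:
  "sublist [x, y] (concat ps) \<Longrightarrow> (\<exists>p \<in> set ps. sublist [x, y] p) \<or> x \<in> last ` set ps"
proof (induction ps)
  case (Cons p ps)
  then have "sublist [x, y] p \<or> sublist [x, y] (concat ps) \<or> x = last p"
    by (auto simp: sublist_append Cons_eq_append_conv suffix_def)
  with Cons.IH show ?case by auto
qed simp

text \<open>Pigeonhole: the n - 1 factors j (j + 1) of a \<theta>(s) b cannot all straddle the
  length s + 1 borders between the pieces a, \<theta>(z) (z in s) and b.\<close>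

lemma sublist_pair_persists:
  assumes "set s \<subseteq> set t" and "length s + 4 \<le> n"
    and "\<forall>m. 1 \<le> m \<and> m < n \<longrightarrow> sublist [m, Suc m] (a @ subst_word \<theta> s @ b)"
  obtains m where "1 \<le> m" "m < n" "sublist [m, Suc m] (a @ subst_word \<theta> t @ b)"
proof -
  define ps where "ps = a # map \<theta> s @ [b]"
  have "card (last ` set ps) < card {1..<n}"
    using card_image_le[of "set ps" last] card_length[of ps] assms(2) by (simp add: ps_def)
  then obtain m where m: "m \<in> {1..<n}" "m \<notin> last ` set ps"
    by (metis card_mono finite_imageI finite_set not_le subsetI)
  moreover have "concat ps = a @ subst_word \<theta> s @ b" by (simp add: ps_def subst_word_def)
  ultimately obtain p where "p \<in> set ps" "sublist [m, Suc m] p"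
    using assms(3) sublist_pair_concat[of m "Suc m" ps] by auto
  moreover have "sublist p (a @ subst_word \<theta> t @ b)" if "p \<in> set ps"
  proof -
    from that consider "p = a" | "p = b" | z where "z \<in> set t" "p = \<theta> z"
      using assms(1) by (auto simp: ps_def)
    then show ?thesis
    proof cases
      case 2
      then show ?thesis using sublist_append_leftI[of b "a @ subst_word \<theta> t"] by simp
    next
      case (3 z)
      then obtain t1 t2 where "t = t1 @ z # t2" by (meson split_list)
      with 3 show ?thesis
        using sublist_appendI[of p "a @ subst_word \<theta> t1" "subst_word \<theta> t2 @ b"] by simp
    qed simp
  qed
  ultimately show ?thesis using that m by (meson atLeastLessThan_iff sublist_order.order.trans)
qed

section \<open>Identities preserve block counts\<close>

lemma eval_word_idem_head:
  "\<psi> x * \<psi> x = \<psi> x \<Longrightarrow> \<psi> x * eval_word \<psi> (x # w) = eval_word \<psi> (x # w)"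
  by (cases w) (simp_all add: mult.assoc[symmetric])

lemma eval_word_two_idempotents:
  fixes e f :: "'a::semigroup_mult"
  assumes e: "e * e = e" and f: "f * f = f" and "w \<noteq> []"
  shows "e * eval_word (\<lambda>l. if l \<in> B then f else e) w * e = ((*) (e * f) ^^ block_count B w) e"
  using assms(3)
proof (induction w)
  case (Cons x w)
  let ?\<psi> = "\<lambda>l. if l \<in> B then f else e"
  show ?case
  proof (cases w)
    case Nil
    then show ?thesis using e by (simp add: mult.assoc)
  next
    case (Cons y w')
    have IH: "e * eval_word ?\<psi> w * e = ((*) (e * f) ^^ block_count B w) e"
      using Cons.IH Cons by simp
    have head: "?\<psi> y * eval_word ?\<psi> w = eval_word ?\<psi> w"
      using eval_word_idem_head[of ?\<psi> y w'] e f Cons by simp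
    consider "x \<notin> B" | "x \<in> B" "y \<in> B" | "x \<in> B" "y \<notin> B" by blast
    then show ?thesis
    proof cases
      case 1
      then show ?thesis using IH Cons e by (simp add: eval_word_Cons mult.assoc[symmetric])
    next
      case 2
      then have "e * eval_word ?\<psi> (x # w) * e = e * eval_word ?\<psi> w * e"
        using head Cons by (simp add: eval_word_Cons)
      moreover have "block_count B (x # w) = block_count B w" using 2 Cons by simp
      ultimately show ?thesis using IH by (simp only:)
    next
      case 3
      then have "e * eval_word ?\<psi> (x # w) * e = (e * f) * (e * eval_word ?\<psi> w * e)"
        using head Cons by (simp add: eval_word_Cons mult.assoc)
      then show ?thesis using IH 3 Cons by simp
    qed
  qed
qed simp

locale blocks_rigid =
  fixes S :: "'a::semigroup_mult itself" and k :: nat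
  assumes two_le_k: "2 \<le> k"
    and power_period: "\<And>z::'a. pow_suc z (k + 1) = pow_suc z 1"
    and not_ii: "\<not> satisfies S (wpow [0] k @ wpow [1] k @ wpow [0] k)
                                (wpow [0] k @ wpow (wpow [1] k @ wpow [0] k) (k + 1))"
begin

abbreviation xk :: "(nat \<Rightarrow> 'a) \<Rightarrow> 'a" where "xk \<phi> \<equiv> eval_word \<phi> (wpow [0] k)"

abbreviation yk :: "(nat \<Rightarrow> 'a) \<Rightarrow> 'a" where "yk \<phi> \<equiv> eval_word \<phi> (wpow [1] k)"

lemma wpow_singleton_neq_Nil: "wpow [i] k \<noteq> []"
  using two_le_k by (simp add: wpow_singleton)

lemma power_k_idem:
  fixes \<phi> :: "nat \<Rightarrow> 'a"
  shows "eval_word \<phi> (wpow [i] k) * eval_word \<phi> (wpow [i] k) = eval_word \<phi> (wpow [i] k)"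
  using pow_suc_idem[OF power_period two_le_k] two_le_k by (simp add: eval_word_wpow_singleton)

lemma ex_xyx_neq_power: "\<exists>\<phi>. xk \<phi> * yk \<phi> * xk \<phi> \<noteq> ((*) (xk \<phi> * yk \<phi>) ^^ (k + 1)) (xk \<phi>)"
proof (rule ccontr)
  assume "\<nexists>\<phi>. xk \<phi> * yk \<phi> * xk \<phi> \<noteq> ((*) (xk \<phi> * yk \<phi>) ^^ (k + 1)) (xk \<phi>)"
  then have "satisfies S (wpow [0] k @ wpow [1] k @ wpow [0] k)
                         (wpow (wpow [0] k @ wpow [1] k) (k + 1) @ wpow [0] k)"
    unfolding satisfies_def is_word_def
    by (simp add: eval_word_append eval_word_wpow_append wpow_singleton_neq_Nil mult.assoc)
  with not_ii show False by (simp add: wpow_shift)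
qed

lemma funpow_exponent_rigid:
  assumes eq: "\<forall>\<phi>. ((*) (xk \<phi> * yk \<phi>) ^^ c) (xk \<phi>) = ((*) (xk \<phi> * yk \<phi>) ^^ d) (xk \<phi>)"
    and "min c d \<le> 1"
  shows "c = d"
proof (rule ccontr)
  assume "c \<noteq> d"
  obtain c' d' where "c' \<le> 1" "c' < d'"
    and eq': "\<forall>\<phi>. ((*) (xk \<phi> * yk \<phi>) ^^ c') (xk \<phi>) = ((*) (xk \<phi> * yk \<phi>) ^^ d') (xk \<phi>)"
  proof (cases "c < d")
    case True
    with assms show ?thesis using that[of c d] by simp
  next
    case False
    with assms \<open>c \<noteq> d\<close> show ?thesis using that[of d c] by (simp add: eq_commute)
  qed
  obtain m where "m \<ge> 2" and m: "\<forall>\<phi>. xk \<phi> * yk \<phi> * xk \<phi> = ((*) (xk \<phi> * yk \<phi>) ^^ m) (xk \<phi>)"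
  proof (cases "c' = 0")
    case True
    then show ?thesis using that[of "Suc d'"] eq' \<open>c' < d'\<close> by simp
  next
    case False
    with \<open>c' \<le> 1\<close> have "c' = 1" by simp
    then show ?thesis using that[of d'] eq' \<open>c' < d'\<close> by simp
  qed
  have "xk \<phi> * yk \<phi> * xk \<phi> = ((*) (xk \<phi> * yk \<phi>) ^^ (k + 1)) (xk \<phi>)" for \<phi>
    using mult_eq_funpow_period[OF power_period m[rule_format] \<open>m \<ge> 2\<close>] two_le_k by simp
  with ex_xyx_neq_power show False by blast
qed

lemma satisfies_block_count_eq:
  assumes uv: "satisfies S u v" and "min (block_count B u) (block_count B v) \<le> 1"
  shows "block_count B u = block_count B v"
proof (rule funpow_exponent_rigid[OF allI \<open>min _ _ \<le> 1\<close>])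
  fix \<phi> :: "nat \<Rightarrow> 'a"
  define \<sigma> where "\<sigma> l = (if l \<in> B then wpow [1] k else wpow [0] k)" for l
  have \<sigma>: "\<forall>l. \<sigma> l \<noteq> []" by (simp add: \<sigma>_def wpow_singleton_neq_Nil)
  have eval_\<sigma>: "(\<lambda>l. eval_word \<phi> (\<sigma> l)) = (\<lambda>l. if l \<in> B then yk \<phi> else xk \<phi>)"
    by (simp add: \<sigma>_def fun_eq_iff)
  have "u \<noteq> []" "v \<noteq> []" using uv by (simp_all add: satisfies_def is_word_def)
  have "eval_word \<phi> (subst_word \<sigma> u) = eval_word \<phi> (subst_word \<sigma> v)"
    using satisfies_subst_word[OF uv \<sigma>] by (simp add: satisfies_def)
  then have "xk \<phi> * eval_word \<phi> (subst_word \<sigma> u) * xk \<phi> = xk \<phi> * eval_word \<phi> (subst_word \<sigma> v) * xk \<phi>"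
    by simp
  then show "((*) (xk \<phi> * yk \<phi>) ^^ block_count B u) (xk \<phi>) = ((*) (xk \<phi> * yk \<phi>) ^^ block_count B v) (xk \<phi>)"
    unfolding eval_word_subst_word[OF \<sigma> \<open>u \<noteq> []\<close>] eval_word_subst_word[OF \<sigma> \<open>v \<noteq> []\<close>] eval_\<sigma>
    by (simp add: eval_word_two_idempotents power_k_idem \<open>u \<noteq> []\<close> \<open>v \<noteq> []\<close>)
qed

lemma satisfies_set_subset:
  assumes "satisfies S u v" shows "set u \<subseteq> set v"
proof
  fix z assume "z \<in> set u"
  show "z \<in> set v"
  proof (rule ccontr)
    assume "z \<notin> set v"
    then have "block_count {z} v = 0" by (simp add: block_count_eq_0_iff)
    then have "block_count {z} u = 0" using satisfies_block_count_eq[OF assms, of "{z}"] by simp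
    with \<open>z \<in> set u\<close> show False by (simp add: block_count_eq_0_iff)
  qed
qed

end

section \<open>Invariants of derivations\<close>

definition preserved_by_identity :: "(nat list \<Rightarrow> bool) \<Rightarrow> nat list \<Rightarrow> nat list \<Rightarrow> bool" where
  "preserved_by_identity Q u v \<longleftrightarrow>
     (\<forall>\<theta> a b. (\<forall>x. \<theta> x \<noteq> []) \<longrightarrow> Q (a @ subst_word \<theta> u @ b) = Q (a @ subst_word \<theta> v @ b))"

lemma preserved_by_identityI:
  "(\<And>\<theta> a b. \<forall>x. \<theta> x \<noteq> [] \<Longrightarrow> Q (a @ subst_word \<theta> u @ b) = Q (a @ subst_word \<theta> v @ b)) \<Longrightarrow>
     preserved_by_identity Q u v"
  by (simp add: preserved_by_identity_def)

lemma preserved_by_identityD: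
  "preserved_by_identity Q u v \<Longrightarrow> \<forall>x. \<theta> x \<noteq> [] \<Longrightarrow>
     Q (a @ subst_word \<theta> u @ b) = Q (a @ subst_word \<theta> v @ b)"
  by (simp add: preserved_by_identity_def)

lemma derivable_preserved_by_identity:
  assumes "derivable \<Sigma> u v" and "\<forall>(s, t) \<in> \<Sigma>. preserved_by_identity Q s t"
  shows "preserved_by_identity Q u v"
  using assms(1)
proof (induction rule: derivable.induct)
  case (ax u v)
  then show ?case using bspec[OF assms(2) ax.hyps] by simp
next
  case (refl u)
  show ?case by (simp add: preserved_by_identity_def)
next
  case (sym u v)
  show ?case
    by (rule preserved_by_identityI) (simp add: preserved_by_identityD[OF sym.IH])
next
  case (trans u v w)
  show ?case
    by (rule preserved_by_identityI) (simp add: preserved_by_identityD[OF trans.IH(1)]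
        preserved_by_identityD[OF trans.IH(2)])
next
  case (subst u v \<sigma>)
  show ?case
  proof (rule preserved_by_identityI)
    fix \<theta> :: "nat \<Rightarrow> nat list" and a b assume "\<forall>x. \<theta> x \<noteq> []"
    with subst.hyps(2) have "\<forall>x. subst_word \<theta> (\<sigma> x) \<noteq> []"
      by (simp add: subst_word_eq_Nil_iff is_word_def)
    from preserved_by_identityD[OF subst.IH this]
    show "Q (a @ subst_word \<theta> (subst_word \<sigma> u) @ b) = Q (a @ subst_word \<theta> (subst_word \<sigma> v) @ b)"
      by (simp add: subst_word_subst_word)
  qed
next
  case (mult_left u v w)
  show ?case
  proof (rule preserved_by_identityI)
    fix \<theta> :: "nat \<Rightarrow> nat list" and a b assume "\<forall>x. \<theta> x \<noteq> []"
    from preserved_by_identityD[OF mult_left.IH this, of "a @ subst_word \<theta> w" b]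
    show "Q (a @ subst_word \<theta> (w @ u) @ b) = Q (a @ subst_word \<theta> (w @ v) @ b)"
      by simp
  qed
next
  case (mult_right u v w)
  show ?case
  proof (rule preserved_by_identityI)
    fix \<theta> :: "nat \<Rightarrow> nat list" and a b assume "\<forall>x. \<theta> x \<noteq> []"
    from preserved_by_identityD[OF mult_right.IH this, of a "subst_word \<theta> w @ b"]
    show "Q (a @ subst_word \<theta> (u @ w) @ b) = Q (a @ subst_word \<theta> (v @ w) @ b)"
      by simp
  qed
qed

section \<open>No finite basis\<close>

definition ascending_word :: "nat \<Rightarrow> nat \<Rightarrow> nat list" where
  "ascending_word k n = [0] @ concat (map (\<lambda>i. wpow [i] k) [1..<n+1]) @ [0]"

definition descending_word :: "nat \<Rightarrow> nat \<Rightarrow> nat list" where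
  "descending_word k n = [0] @ concat (map (\<lambda>i. wpow [i] k) (rev [1..<n+1])) @ [0]"

lemma upt_split: "i \<le> j \<Longrightarrow> j \<le> l \<Longrightarrow> [i..<l] = [i..<j] @ [j..<l]"
  using upt_add_eq_append[of i j "l - j"] by simp

lemma ascending_word_interval_block:
  assumes "k \<ge> 1" and "1 \<le> i" and "i \<le> j" and "j \<le> n"
  shows "block_count {i..j} (ascending_word k n) = 1"
proof -
  let ?f = "\<lambda>l. replicate k l"
  have "[1..<n+1] = [1..<i] @ [i..<Suc j] @ [Suc j..<n+1]"
    using assms(2-4) upt_split[of 1 i "n + 1"] upt_split[of i "Suc j" "n + 1"] by simp
  then have w: "ascending_word k n = (0 # concat (map ?f [1..<i])) @ concat (map ?f [i..<Suc j])
      @ (concat (map ?f [Suc j..<n+1]) @ [0])"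
    by (simp add: ascending_word_def wpow_singleton)
  show ?thesis
    unfolding w using assms by (intro block_count_single_block) auto
qed

lemma ascending_word_sublist:
  assumes "k \<ge> 1" and "1 \<le> j" and "j < n"
  shows "sublist [j, Suc j] (ascending_word k n)"
proof -
  let ?f = "\<lambda>l. replicate k l"
  obtain k' where k: "k = Suc k'" using assms(1) by (cases k) auto
  have "[1..<n+1] = [1..<j] @ [j..<Suc (Suc j)] @ [Suc (Suc j)..<n+1]"
    using assms(2,3) upt_split[of 1 j "n + 1"] upt_split[of j "Suc (Suc j)" "n + 1"] by simp
  then have "ascending_word k n = (0 # concat (map ?f [1..<j]) @ replicate k' j) @ [j, Suc j]
      @ (replicate k' (Suc j) @ concat (map ?f [Suc (Suc j)..<n+1]) @ [0])"
    by (simp add: ascending_word_def wpow_singleton k replicate_append_same[symmetric])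
  then show ?thesis by (simp only: sublist_appendI)
qed

lemma sorted_wrt_concat_replicate:
  "sorted_wrt (\<ge>) xs \<Longrightarrow> sorted_wrt (\<ge>) (concat (map (\<lambda>i. replicate k (i::nat)) xs))"
proof (induction xs)
  case (Cons x xs)
  have "sorted_wrt (\<ge>) (replicate k x)" by (induction k) auto
  with Cons show ?case by (auto simp: sorted_wrt_append)
qed simp

lemma descending_word_not_sublist: "\<not> sublist [1, 2] (descending_word k n)"
proof
  define M where "M = concat (map (\<lambda>i. replicate k i) (rev [1..<n+1])) @ [0]"
  have "sorted_wrt (\<ge>) (rev [1..<n+1])"
    using sorted_upt[of 1 "n + 1"] by (simp only: sorted_wrt_rev)
  then have "sorted_wrt (\<ge>) M"
    unfolding M_def by (simp add: sorted_wrt_append sorted_wrt_concat_replicate)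
  assume "sublist [1, 2] (descending_word k n)"
  then have "sublist [1, 2] M"
    by (simp add: descending_word_def wpow_singleton sublist_Cons_right M_def)
  with \<open>sorted_wrt (\<ge>) M\<close> show False by (auto simp: sublist_def sorted_wrt_append)
qed

context blocks_rigid
begin

definition keeps_chain :: "nat \<Rightarrow> nat list \<Rightarrow> bool" where
  "keeps_chain n w \<longleftrightarrow>
     satisfies S (ascending_word k n) w \<and> (\<forall>m. 1 \<le> m \<and> m < n \<longrightarrow> sublist [m, Suc m] w)"

lemma keeps_chain_ascending_word: "keeps_chain n (ascending_word k n)"
  using two_le_k ascending_word_sublist[of k]
  by (simp add: keeps_chain_def satisfies_def is_word_def ascending_word_def)

lemma not_keeps_chain_descending_word:
  assumes "n \<ge> 2" shows "\<not> keeps_chain n (descending_word k n)"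
proof
  assume "keeps_chain n (descending_word k n)"
  with assms have "sublist [1, Suc 1] (descending_word k n)" by (simp add: keeps_chain_def)
  with descending_word_not_sublist show False by (simp add: numeral_2_eq_2)
qed

lemma keeps_chain_identity_instance:
  assumes st: "satisfies S s t" and "length s + 4 \<le> n" and \<theta>: "\<forall>x. \<theta> x \<noteq> []"
    and "keeps_chain n (a @ subst_word \<theta> s @ b)"
  shows "keeps_chain n (a @ subst_word \<theta> t @ b)"
proof -
  let ?w = "a @ subst_word \<theta> t @ b"
  have sat: "satisfies S (ascending_word k n) ?w"
    using assms(4) satisfies_in_context[OF satisfies_subst_word[OF st \<theta>]]
    unfolding keeps_chain_def by (blast intro: satisfies_trans)
  have interval: "block_count {i..j} ?w = 1" if "1 \<le> i" "i \<le> j" "j \<le> n" for i j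
  proof -
    have "block_count {i..j} (ascending_word k n) = 1"
      using ascending_word_interval_block[OF _ that] two_le_k by simp
    with satisfies_block_count_eq[OF sat, of "{i..j}"] show ?thesis by simp
  qed
  have single: "block_count {j} ?w = 1" if "1 \<le> j" "j \<le> n" for j
    using interval[of j j] that by simp
  have pair: "block_count {j, Suc j} ?w = 1" if "1 \<le> j" "j < n" for j
    using interval[of j "Suc j"] that by (simp add: atLeastAtMostSuc_conv insert_commute)
  obtain i where "1 \<le> i" "i < n" "sublist [i, Suc i] ?w"
    using sublist_pair_persists[OF satisfies_set_subset[OF st] \<open>length s + 4 \<le> n\<close>] assms(4)
    unfolding keeps_chain_def by blast
  with sublist_pair_chain[OF single pair] sat show ?thesis
    unfolding keeps_chain_def by blast
qed

theorem not_finitely_based: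
  assumes i: "\<And>n. n > 1 \<Longrightarrow> satisfies S (ascending_word k n) (descending_word k n)"
  shows "\<not> finitely_based S"
proof
  assume "finitely_based S"
  then obtain \<Sigma> where "finite \<Sigma>" and sound: "\<forall>(s, t) \<in> \<Sigma>. satisfies S s t"
    and complete: "\<forall>u v. satisfies S u v \<longrightarrow> derivable \<Sigma> u v"
    unfolding finitely_based_def by blast
  define n where "n = (\<Sum>(s, t) \<in> \<Sigma>. length s + length t) + 4"
  have short: "length s + 4 \<le> n" "length t + 4 \<le> n" if "(s, t) \<in> \<Sigma>" for s t
    using member_le_sum[OF that, of "\<lambda>(s, t). length s + length t"] \<open>finite \<Sigma>\<close>
    by (auto simp: n_def)
  have "preserved_by_identity (keeps_chain n) s t" if "(s, t) \<in> \<Sigma>" for s t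
  proof (rule preserved_by_identityI)
    fix \<theta> :: "nat \<Rightarrow> nat list" and a b assume \<theta>: "\<forall>x. \<theta> x \<noteq> []"
    from sound that have "satisfies S s t" by blast
    with keeps_chain_identity_instance[OF _ short(1)[OF that] \<theta>]
      keeps_chain_identity_instance[OF satisfies_sym short(2)[OF that] \<theta>]
    show "keeps_chain n (a @ subst_word \<theta> s @ b) = keeps_chain n (a @ subst_word \<theta> t @ b)"
      by blast
  qed
  moreover have "derivable \<Sigma> (ascending_word k n) (descending_word k n)"
    using complete i[of n] by (simp add: n_def)
  ultimately have "preserved_by_identity (keeps_chain n) (ascending_word k n) (descending_word k n)"
    using derivable_preserved_by_identity by blast
  from preserved_by_identityD[OF this, of "\<lambda>x. [x]" "[]" "[]"]
  show False
    using keeps_chain_ascending_word not_keeps_chain_descending_word by (simp add: n_def)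
qed

end

theorem theorem5p2:
  fixes k :: nat and S :: "'a::semigroup_mult itself"
  assumes k: "k > 1"
    and i: "\<And>n. n > 1 \<Longrightarrow> satisfies S
              ([0] @ concat (map (\<lambda>i. wpow [i] k) [1..<n+1]) @ [0])
              ([0] @ concat (map (\<lambda>i. wpow [i] k) (rev [1..<n+1])) @ [0])"
    and ii: "\<not> satisfies S (wpow [0] k @ wpow [1] k @ wpow [0] k)
                           (wpow [0] k @ wpow (wpow [1] k @ wpow [0] k) (k + 1))"
    and iii1: "satisfies S (wpow [0] (k + 2)) (wpow [0] 2)"
    and iii2: "satisfies S (wpow [0] (k + 1) @ [1, 0]) [0, 1, 0]"
    and iii3: "satisfies S ([0, 1] @ wpow [0] (k + 1)) [0, 1, 0]"
  shows "\<not> finitely_based S"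
proof -
  interpret blocks_rigid S k
    using k ii satisfies_power_period[OF iii1] by unfold_locales auto
  show ?thesis
    using i by (intro not_finitely_based) (simp add: ascending_word_def descending_word_def)
qed

end
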